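(* Let $(G,\preceq)$ be a left-ordered group. Let $S^+$ be the set of elements $h\succ id$ such that $h\preceq w$ for every crossing $(f,g,u,v,w)$ of the left-translation action of $G$ on $(G,\preceq)$ with $id\preceq u$; let $S^-$ be the set of elements $h\prec id$ such that $w\preceq h$ for every such crossing with $v\preceq id$; and let $S=\{id\}\cup S^+\cup S^-$. Then the Conradian soul of $(G,\preceq)$ coincides with $S$.
   Context: A left-ordering is a total order invariant under left multiplication; it is Conradian if for all $f\succ id$, $g\succ id$ there is $n\in\mathbb{N}$ with $fg^n\succ g$. A subset $C$ is convex if $f_1\prec h\prec f_2$ with $f_1,f_2\in C$ implies $h\in C$. The Conradian soul $C_\preceq(G)$ is the maximal (for inclusion) $\preceq$-convex subgroup on which the restriction of $\preceq$ is Conradian. A crossing for the left-translation action is a 5-tuple $(f,g,u,v,w)$ of elements of $G$ with: $u\prec w\prec v$; $g^nu\prec v$ and $f^nv\succ u$ for all $n\in\mathbb{N}$; and $f^Nv\prec w\prec g^Mu$ for some $M,N\in\mathbb{N}$. *)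

theory Defs
  imports Main
begin

text \<open>Groups are written additively via the type class group_add (which does NOT
  assume commutativity): the product f g is f + g, the identity is 0, and
  g^n u is the n-fold left translation of u by g.\<close>

definition gpow_act :: "'a::group_add \<Rightarrow> nat \<Rightarrow> 'a \<Rightarrow> 'a" where
  "gpow_act g n u = ((\<lambda>x. g + x) ^^ n) u"

definition left_ordering :: "('a::group_add \<Rightarrow> 'a \<Rightarrow> bool) \<Rightarrow> bool" where
  "left_ordering le \<longleftrightarrow>
     (\<forall>x. le x x) \<and>
     (\<forall>x y. le x y \<and> le y x \<longrightarrow> x = y) \<and>
     (\<forall>x y z. le x y \<and> le y z \<longrightarrow> le x z) \<and>
     (\<forall>x y. le x y \<or> le y x) \<and>
     (\<forall>x y z. le x y \<longrightarrow> le (z + x) (z + y))"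

definition strict :: "('a \<Rightarrow> 'a \<Rightarrow> bool) \<Rightarrow> 'a \<Rightarrow> 'a \<Rightarrow> bool" where
  "strict le x y \<longleftrightarrow> le x y \<and> x \<noteq> y"

definition subgroup_of :: "'a::group_add set \<Rightarrow> bool" where
  "subgroup_of H \<longleftrightarrow> 0 \<in> H \<and> (\<forall>x\<in>H. \<forall>y\<in>H. x + y \<in> H) \<and> (\<forall>x\<in>H. - x \<in> H)"

definition convex_set :: "('a \<Rightarrow> 'a \<Rightarrow> bool) \<Rightarrow> 'a set \<Rightarrow> bool" where
  "convex_set le C \<longleftrightarrow>
     (\<forall>f1\<in>C. \<forall>f2\<in>C. \<forall>h. strict le f1 h \<and> strict le h f2 \<longrightarrow> h \<in> C)"

definition conradian_on :: "('a::group_add \<Rightarrow> 'a \<Rightarrow> bool) \<Rightarrow> 'a set \<Rightarrow> bool" where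
  "conradian_on le C \<longleftrightarrow>
     (\<forall>f\<in>C. \<forall>g\<in>C. strict le 0 f \<and> strict le 0 g \<longrightarrow>
        (\<exists>n::nat. strict le g (f + gpow_act g n 0)))"

definition conradian_soul :: "('a::group_add \<Rightarrow> 'a \<Rightarrow> bool) \<Rightarrow> 'a set" where
  "conradian_soul le =
     (THE C. subgroup_of C \<and> convex_set le C \<and> conradian_on le C \<and>
        (\<forall>D. subgroup_of D \<and> convex_set le D \<and> conradian_on le D \<and> C \<subseteq> D \<longrightarrow> D = C))"

definition crossing :: "('a::group_add \<Rightarrow> 'a \<Rightarrow> bool) \<Rightarrow> 'a \<Rightarrow> 'a \<Rightarrow> 'a \<Rightarrow> 'a \<Rightarrow> 'a \<Rightarrow> bool" where
  "crossing le f g u v w \<longleftrightarrow>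
     strict le u w \<and> strict le w v \<and>
     (\<forall>n::nat. strict le (gpow_act g n u) v \<and> strict le u (gpow_act f n v)) \<and>
     (\<exists>M N::nat. strict le (gpow_act f N v) w \<and> strict le w (gpow_act g M u))"

end

theory Submission
  imports Defs
begin

text \<open>Crossings and failures of the Conradian property are two sides of one phenomenon. A pair
  0 < a, 0 < b with a + n b < b for all n produces the crossing (a, a + b - a, a, b, a + b);
  conversely, translating a crossing (f, g, u, v, w) so that u becomes 0 and replacing f and g by
  suitable powers produces such a pair below -u + w. Hence a convex Conradian subgroup contains no
  element above the w of a crossing with 0 \<le> u, i.e. it lies in S. On the other hand S is a convex
  subgroup (S+ is closed under sums, and h \<mapsto> -h exchanges S+ and S-, one direction by passing to
  the reversed order) that contains no such pair, so it is the largest convex Conradian subgroup.\<close>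

lemma strict_conversep [simp]: "strict le\<inverse>\<inverse> x y = strict le y x"
  by (auto simp: strict_def)

lemma left_ordering_conversep: "left_ordering le \<Longrightarrow> left_ordering le\<inverse>\<inverse>"
  unfolding left_ordering_def conversep_iff by blast

locale left_ordered =
  fixes le :: "'a::group_add \<Rightarrow> 'a \<Rightarrow> bool"
  assumes left_ordering: "left_ordering le"

sublocale left_ordered \<subseteq> ord: linorder le "strict le"
  using left_ordering unfolding left_ordering_def strict_def
  by unfold_locales blast+

context left_ordered
begin

lemma add_left_mono: "le x y \<Longrightarrow> le (z + x) (z + y)"
  using left_ordering unfolding left_ordering_def by blast

lemma add_left_le_iff [simp]: "le (z + x) (z + y) \<longleftrightarrow> le x y"
  using add_left_mono add_left_mono[of "z + x" "z + y" "- z"] by (auto simp: add.assoc[symmetric])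

lemma add_left_less_iff [simp]: "strict le (z + x) (z + y) \<longleftrightarrow> strict le x y"
  by (simp add: ord.not_le[symmetric])

lemma neg_less_zero_iff: "strict le x 0 \<longleftrightarrow> strict le 0 (- x)"
  using add_left_less_iff[of "- x" x 0] by simp

lemma add_pos_pos:
  assumes "strict le 0 x" "strict le 0 y"
  shows "strict le 0 (x + y)"
proof -
  have "strict le (x + 0) (x + y)" using assms(2) by (simp only: add_left_less_iff)
  then have "strict le x (x + y)" by simp
  with assms(1) show ?thesis by (rule ord.less_trans)
qed

lemma left_ordered_conversep: "left_ordered le\<inverse>\<inverse>"
  by (rule left_ordered.intro, rule left_ordering_conversep[OF left_ordering])

lemma add_pos_neg_mem:
  assumes between: "\<And>s t z. s \<in> C \<Longrightarrow> t \<in> C \<Longrightarrow> le s z \<Longrightarrow> le z t \<Longrightarrow> z \<in> C"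
    and uminus: "\<And>z. z \<in> C \<Longrightarrow> - z \<in> C" and "0 \<in> C"
    and "x \<in> C" "y \<in> C" "strict le 0 x" "strict le y 0"
  shows "x + y \<in> C"
proof (cases "le 0 (x + y)")
  case True
  have "le (x + y) x" using add_left_less_iff[of x y 0] \<open>strict le y 0\<close> by (simp add: ord.less_imp_le)
  with True show ?thesis using between \<open>0 \<in> C\<close> \<open>x \<in> C\<close> by blast
next
  case False
  then have "strict le 0 (- (x + y))" by (simp add: ord.not_le neg_less_zero_iff)
  then have "le 0 (- y + - x)" unfolding minus_add by (rule ord.less_imp_le)
  moreover have "le (- y + - x) (- y)"
    using add_left_less_iff[of "- y" "- x" 0] neg_less_zero_iff[of "- x"] \<open>strict le 0 x\<close>
    by (simp add: ord.less_imp_le)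
  ultimately have "- y + - x \<in> C" using between \<open>0 \<in> C\<close> uminus \<open>y \<in> C\<close> by blast
  then show ?thesis using uminus[of "- y + - x"] by (simp add: minus_add[symmetric])
qed

lemma subgroup_ofI_convex:
  assumes "0 \<in> C"
    and between: "\<And>s t z. s \<in> C \<Longrightarrow> t \<in> C \<Longrightarrow> le s z \<Longrightarrow> le z t \<Longrightarrow> z \<in> C"
    and uminus: "\<And>z. z \<in> C \<Longrightarrow> - z \<in> C"
    and add_pos: "\<And>x y. x \<in> C \<Longrightarrow> y \<in> C \<Longrightarrow> strict le 0 x \<Longrightarrow> strict le 0 y \<Longrightarrow> x + y \<in> C"
  shows "subgroup_of C"
proof -
  interpret rev: left_ordered "le\<inverse>\<inverse>" by (rule left_ordered_conversep)
  have "x + y \<in> C" if "x \<in> C" "y \<in> C" for x y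
  proof -
    consider "x = 0" | "y = 0" | "strict le 0 x" "strict le 0 y" | "strict le x 0" "strict le y 0"
      | "strict le 0 x" "strict le y 0" | "strict le x 0" "strict le 0 y"
      using ord.less_linear by blast
    then show ?thesis
    proof cases
      case 4
      then have "- y + - x \<in> C" using add_pos uminus that by (simp only: neg_less_zero_iff)
      then show ?thesis using uminus[of "- y + - x"] by (simp add: minus_add[symmetric])
    next
      case 5
      then show ?thesis using add_pos_neg_mem[of C x y] between uminus \<open>0 \<in> C\<close> that by blast
    next
      case 6
      have "z \<in> C" if "s \<in> C" "t \<in> C" "le\<inverse>\<inverse> s z" "le\<inverse>\<inverse> z t" for s t z
        using between[of t s z] that by simp
      from rev.add_pos_neg_mem[of C x y, OF this uminus \<open>0 \<in> C\<close> that] 6 show ?thesis by simp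
    qed (use that add_pos in simp_all)
  qed
  with assms show ?thesis unfolding subgroup_of_def by blast
qed

end

section \<open>Orbits and crossings\<close>

lemma gpow_act_0 [simp]: "gpow_act g 0 x = x"
  by (simp add: gpow_act_def)

lemma gpow_act_Suc [simp]: "gpow_act g (Suc n) x = g + gpow_act g n x"
  by (simp add: gpow_act_def)

lemma gpow_act_eq_add: "gpow_act g n x = gpow_act g n 0 + x"
  by (induct n) (simp_all add: add.assoc)

lemma gpow_act_Suc_right: "gpow_act g (Suc n) x = gpow_act g n (g + x)"
  by (simp add: gpow_act_def funpow_Suc_right del: funpow.simps)

lemma gpow_act_Suc_zero: "gpow_act g (Suc n) 0 = gpow_act g n 0 + g"
  by (metis add_0_right gpow_act_Suc_right gpow_act_eq_add)

lemma gpow_act_add: "gpow_act g (m + n) x = gpow_act g m (gpow_act g n x)"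
  by (simp add: gpow_act_def funpow_add)

lemma gpow_act_mult: "gpow_act (gpow_act g k 0) n x = gpow_act g (k * n) x"
proof (induct n arbitrary: x)
  case (Suc n)
  have "gpow_act (gpow_act g k 0) (Suc n) x = gpow_act g k 0 + gpow_act g (k * n) x"
    using Suc by simp
  also have "\<dots> = gpow_act g (k * Suc n) x"
    by (simp add: gpow_act_add gpow_act_eq_add[of g k "gpow_act g (k * n) x"] add.commute)
  finally show ?case .
qed simp

lemma gpow_act_conj: "gpow_act (z + g - z) n (z + x) = z + gpow_act g n x"
  by (induct n) (simp_all add: add.assoc[symmetric])

lemma crossingI:
  assumes "strict le u w" "strict le w v" "\<And>n. strict le (gpow_act g n u) v"
    "\<And>n. strict le u (gpow_act f n v)" "strict le (gpow_act f N v) w" "strict le w (gpow_act g M u)"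
  shows "crossing le f g u v w"
  using assms unfolding crossing_def by blast

lemma crossingE:
  assumes "crossing le f g u v w"
  obtains M N where "strict le u w" "strict le w v" "\<And>n. strict le (gpow_act g n u) v"
    "\<And>n. strict le u (gpow_act f n v)" "strict le (gpow_act f N v) w" "strict le w (gpow_act g M u)"
  using assms unfolding crossing_def by blast

lemma crossing_conversep: "crossing le\<inverse>\<inverse> f g u v w = crossing le g f v u w"
  unfolding crossing_def by auto

context left_ordered
begin

lemma gpow_act_le_iff [simp]: "le (gpow_act g n x) (gpow_act g n y) \<longleftrightarrow> le x y"
  by (subst (1 2) gpow_act_eq_add) simp

lemma gpow_act_less_iff [simp]: "strict le (gpow_act g n x) (gpow_act g n y) \<longleftrightarrow> strict le x y"
  by (subst (1 2) gpow_act_eq_add) simp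

lemma orbit_le: "le (g + x) x \<Longrightarrow> le (gpow_act g n x) x"
proof (induct n)
  case (Suc n)
  have "le (gpow_act g n (g + x)) (gpow_act g n x)" using Suc.prems by simp
  with Suc show ?case unfolding gpow_act_Suc_right by (blast intro: ord.order_trans)
qed simp

lemma orbit_ge: "le x (g + x) \<Longrightarrow> le x (gpow_act g n x)"
proof (induct n)
  case (Suc n)
  have "le (gpow_act g n x) (gpow_act g n (g + x))" using Suc.prems by simp
  with Suc show ?case unfolding gpow_act_Suc_right by (blast intro: ord.order_trans)
qed simp

lemma orbit_strict_antimono:
  assumes "strict le (g + x) x" "m < n"
  shows "strict le (gpow_act g n x) (gpow_act g m x)"
proof -
  obtain k where n: "n = m + Suc k" using less_imp_Suc_add[OF assms(2)] by auto
  have "strict le (gpow_act g k (g + x)) (gpow_act g k x)" using assms(1) by simp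
  moreover have "le (gpow_act g k x) x" by (rule orbit_le[OF ord.less_imp_le[OF assms(1)]])
  ultimately have "strict le (gpow_act g (Suc k) x) x"
    unfolding gpow_act_Suc_right by (rule ord.less_le_trans)
  then have "strict le (gpow_act g m (gpow_act g (Suc k) x)) (gpow_act g m x)" by simp
  then show ?thesis by (simp only: n gpow_act_add)
qed

lemma crossing_translate:
  assumes "crossing le f g u v w"
  shows "crossing le (z + f - z) (z + g - z) (z + u) (z + v) (z + w)"
proof -
  obtain M N where "strict le u w" "strict le w v" "\<And>n. strict le (gpow_act g n u) v"
    "\<And>n. strict le u (gpow_act f n v)" "strict le (gpow_act f N v) w" "strict le w (gpow_act g M u)"
    using crossingE[OF assms] by metis
  then show ?thesis
    by (intro crossingI[where N=N and M=M]) (simp_all add: gpow_act_conj)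
qed

lemma crossing_powers:
  assumes "crossing le f g u v w"
  obtains F G where "crossing le F G u v w" "strict le (F + v) w" "strict le w (G + u)"
proof -
  obtain M N where c: "strict le u w" "strict le w v" "\<And>n. strict le (gpow_act g n u) v"
    "\<And>n. strict le u (gpow_act f n v)" "strict le (gpow_act f N v) w" "strict le w (gpow_act g M u)"
    using crossingE[OF assms] by metis
  let ?F = "gpow_act f N 0" and ?G = "gpow_act g M 0"
  have F: "?F + v = gpow_act f N v" and G: "?G + u = gpow_act g M u"
    by (metis gpow_act_eq_add)+
  have "crossing le ?F ?G u v w"
    by (rule crossingI[where N=1 and M=1]) (simp_all add: gpow_act_mult c F G)
  then show ?thesis by (rule that) (simp_all add: F G c)
qed

lemma crossing_decreasing:
  assumes "crossing le f g u v w"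
  shows "strict le (f + v) v"
proof (rule ccontr)
  obtain M N where "strict le w v" "strict le (gpow_act f N v) w"
    using crossingE[OF assms] by metis
  moreover assume "\<not> strict le (f + v) v"
  then have "le v (gpow_act f N v)" by (simp add: orbit_ge ord.not_less)
  ultimately show False by (meson ord.less_asym ord.le_less_trans)
qed

lemma crossing_lower_w:
  assumes c: "crossing le f g u v w" and N: "strict le (gpow_act f N v) w" and "N \<le> n"
  shows "crossing le f g u v (gpow_act f n v)"
proof -
  obtain M N' where c': "strict le u w" "strict le w v" "\<And>n. strict le (gpow_act g n u) v"
    "\<And>n. strict le u (gpow_act f n v)" "strict le w (gpow_act g M u)"
    using crossingE[OF c] by metis
  have down: "strict le (f + v) v" by (rule crossing_decreasing[OF c])
  have "N \<noteq> 0" using N c'(2) by (metis gpow_act_0 ord.less_asym)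
  then have "strict le (gpow_act f n v) v"
    using orbit_strict_antimono[OF down, of 0 n] \<open>N \<le> n\<close> by simp
  moreover have "strict le (gpow_act f (Suc n) v) (gpow_act f n v)"
    using orbit_strict_antimono[OF down, of n "Suc n"] by simp
  moreover have "le (gpow_act f n v) (gpow_act f N v)"
    using orbit_strict_antimono[OF down, of N n] \<open>N \<le> n\<close>
    by (cases "N = n") (simp_all add: ord.less_imp_le)
  then have "strict le (gpow_act f n v) (gpow_act g M u)"
    using N c'(5) by (meson ord.le_less_trans ord.less_trans)
  ultimately show ?thesis
    using c' by (intro crossingI[where N="Suc n" and M=M]) auto
qed

lemma crossing_raise_u:
  assumes c: "crossing le f g u v w" and "le u x" "strict le x w"
    and "\<And>n. strict le x (gpow_act f n v)"
  shows "crossing le f g x v w"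
proof -
  obtain M N where c': "strict le u w" "strict le w v" "\<And>n. strict le (gpow_act g n u) v"
    "\<And>n. strict le u (gpow_act f n v)" "strict le (gpow_act f N v) w" "strict le w (gpow_act g M u)"
    using crossingE[OF c] by metis
  have orbit: "strict le (gpow_act g n x) v" for n
  proof -
    have "strict le (gpow_act g n x) (gpow_act g n (gpow_act g M u))"
      using \<open>strict le x w\<close> c'(6) by (simp add: ord.less_trans)
    then show ?thesis using c'(3)[of "n + M"] unfolding gpow_act_add by (rule ord.less_trans)
  qed
  have "strict le w (gpow_act g M x)"
    using c'(6) \<open>le u x\<close> by (meson gpow_act_le_iff ord.less_le_trans)
  then show ?thesis by (rule crossingI[OF assms(3) c'(2) orbit assms(4) c'(5)])
qed

end

section \<open>Non-Conradian pairs\<close>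

definition nonconradian_pair :: "('a::group_add \<Rightarrow> 'a \<Rightarrow> bool) \<Rightarrow> 'a \<Rightarrow> 'a \<Rightarrow> bool" where
  "nonconradian_pair le f g \<longleftrightarrow>
     strict le 0 f \<and> strict le 0 g \<and> (\<forall>n. strict le (f + gpow_act g n 0) g)"

context left_ordered
begin

lemma conradian_on_iff: "conradian_on le C \<longleftrightarrow> (\<forall>f\<in>C. \<forall>g\<in>C. \<not> nonconradian_pair le f g)"
proof
  assume "conradian_on le C"
  then show "\<forall>f\<in>C. \<forall>g\<in>C. \<not> nonconradian_pair le f g"
    unfolding conradian_on_def nonconradian_pair_def by (meson ord.less_asym)
next
  assume no_pair: "\<forall>f\<in>C. \<forall>g\<in>C. \<not> nonconradian_pair le f g"
  show "conradian_on le C" unfolding conradian_on_def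
  proof (intro ballI impI)
    fix f g assume "f \<in> C" "g \<in> C" and pos: "strict le 0 f \<and> strict le 0 g"
    show "\<exists>n. strict le g (f + gpow_act g n 0)"
    proof (rule ccontr)
      assume "\<not> ?thesis"
      then have below: "le (f + gpow_act g n 0) g" for n by (simp add: ord.not_less)
      have "f + gpow_act g n 0 \<noteq> g" for n
      proof
        assume "f + gpow_act g n 0 = g"
        then have "f + gpow_act g (Suc n) 0 = g + g"
          by (simp only: gpow_act_Suc_zero add.assoc[symmetric])
        moreover have "strict le g (g + g)" using add_left_less_iff[of g 0 g] pos by simp
        ultimately show False using below[of "Suc n"] by (simp add: ord.not_le[symmetric])
      qed
      then have "nonconradian_pair le f g"
        using below pos unfolding nonconradian_pair_def strict_def by blast
      with no_pair \<open>f \<in> C\<close> \<open>g \<in> C\<close> show False by blast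
    qed
  qed
qed

lemma crossing_of_nonconradian_pair:
  assumes "nonconradian_pair le a b"
  shows "crossing le a (a + b - a) a b (a + b)"
proof -
  from assms have a: "strict le 0 a" and b: "strict le 0 b"
    and ab: "\<And>n. strict le (a + gpow_act b n 0) b"
    unfolding nonconradian_pair_def by auto
  have orbit: "gpow_act (a + b - a) n a = a + gpow_act b n 0" for n
    using gpow_act_conj[of a b n 0] by simp
  have "strict le 0 (gpow_act a n b)" for n
    by (induct n) (simp_all add: b a add_pos_pos)
  then have "strict le a (gpow_act a n b)" for n
    using ab[of 0] add_left_less_iff[of a 0] by (cases n) auto
  moreover have "strict le a (a + b)" using add_left_less_iff[of a 0 b] b by simp
  moreover have "strict le (a + b) b" using ab[of 1] by simp
  moreover have "strict le (a + b) (gpow_act (a + b - a) 2 a)"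
    unfolding orbit using add_left_less_iff[of b 0 b] b by (simp add: numeral_2_eq_2)
  ultimately show ?thesis
    using ab by (intro crossingI[where N=2 and M=2]) (simp_all add: orbit numeral_2_eq_2)
qed

lemma nonconradian_pair_below:
  assumes a: "strict le 0 a" and w: "strict le 0 w" "strict le w G"
    and orbit: "\<And>n. strict le (a + gpow_act G n 0) w"
  shows "nonconradian_pair le a (a + G)" and "strict le (a + G) w"
proof -
  have G: "strict le 0 G" using w by (rule ord.less_trans)
  show "strict le (a + G) w" using orbit[of 1] by simp
  have aGG: "strict le (a + G + G) G"
    using orbit[of 2] w(2) by (simp add: numeral_2_eq_2 add.assoc)
  have "strict le (gpow_act (a + G) n 0) G" for n
  proof (induct n)
    case (Suc n)
    then have "strict le (a + G + gpow_act (a + G) n 0) (a + G + G)"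
      by (simp only: add_left_less_iff)
    then show ?case unfolding gpow_act_Suc using aGG by (rule ord.less_trans)
  qed (simp add: G)
  then show "nonconradian_pair le a (a + G)"
    using a add_pos_pos[OF a G] unfolding nonconradian_pair_def by simp
qed

lemma nonconradian_pair_of_crossing_at_zero:
  assumes "crossing le f g 0 v w"
  obtains a b where "nonconradian_pair le a b" "strict le b w"
proof -
  \<comment> \<open>After passing to powers, F + v < w < G; the pair is then (F + G, F + G + G).\<close>
  obtain F G where c: "crossing le F G 0 v w" and Fv: "strict le (F + v) w" and wG: "strict le w G"
    using crossing_powers[OF assms] by (metis add_0_right)
  obtain M N where w: "strict le 0 w" and Gv: "\<And>n. strict le (gpow_act G n 0) v"
    and F_pos: "\<And>n. strict le 0 (gpow_act F n v)"
    using crossingE[OF c] by metis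
  have "strict le 0 (F + G)"
  proof (rule ccontr)
    assume "\<not> ?thesis"
    then have "le G (- F)"
      using add_left_le_iff[of "- F" "F + G" 0] by (simp add: ord.not_less add.assoc[symmetric])
    then have "strict le (F + v) (- F)" using Fv wG by (meson ord.less_trans ord.less_le_trans)
    then have "strict le (gpow_act F 2 v) 0"
      using add_left_less_iff[of F "F + v" "- F"] by (simp add: numeral_2_eq_2)
    then show False using F_pos[of 2] ord.less_asym by blast
  qed
  moreover have "strict le (F + G + gpow_act G n 0) w" for n
  proof -
    have "strict le (F + gpow_act G (Suc n) 0) (F + v)" using Gv[of "Suc n"] by simp
    then show ?thesis using Fv unfolding add.assoc gpow_act_Suc by (rule ord.less_trans)
  qed
  ultimately show ?thesis using nonconradian_pair_below[OF _ w wG] that by blast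
qed

lemma nonconradian_pair_of_crossing:
  assumes "crossing le f g u v w"
  obtains a b where "nonconradian_pair le a b" "strict le b (- u + w)"
proof -
  have "crossing le (- u + f - - u) (- u + g - - u) 0 (- u + v) (- u + w)"
    using crossing_translate[OF assms, of "- u"] by simp
  then show ?thesis using that by (rule nonconradian_pair_of_crossing_at_zero)
qed

lemma convex_conradian_subgroup_below_crossing:
  assumes D: "subgroup_of D" "convex_set le D" "conradian_on le D" "h \<in> D"
    and c: "crossing le f g u v w" and "le 0 u"
  shows "le h w"
proof (rule ccontr)
  assume "\<not> le h w"
  then have wh: "strict le w h" by (simp add: ord.not_le)
  have convex: "x \<in> D" if "a \<in> D" "b \<in> D" "strict le a x" "strict le x b" for a b x
    using D(2) that unfolding convex_set_def by blast
  have "0 \<in> D" using D(1) unfolding subgroup_of_def by blast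
  obtain M N where uw: "strict le u w" using crossingE[OF c] by metis
  then have "u \<in> D" using \<open>le 0 u\<close> convex[OF \<open>0 \<in> D\<close> \<open>h \<in> D\<close> _ ord.less_trans[OF uw wh]]
    by (cases "u = 0") (auto simp: \<open>0 \<in> D\<close> strict_def)
  moreover have "w \<in> D"
    using convex[OF \<open>0 \<in> D\<close> \<open>h \<in> D\<close> ord.le_less_trans[OF \<open>le 0 u\<close> uw] wh] .
  ultimately have w': "- u + w \<in> D" using D(1) unfolding subgroup_of_def by blast
  obtain a b where ab: "nonconradian_pair le a b" and bw: "strict le b (- u + w)"
    using nonconradian_pair_of_crossing[OF c] by blast
  then have "strict le 0 a" "strict le a b" "strict le 0 b"
    unfolding nonconradian_pair_def by (auto dest: spec[of _ 0])
  then have "a \<in> D" "b \<in> D"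
    using convex[OF \<open>0 \<in> D\<close> w'] bw ord.less_trans by blast+
  with ab D(3) show False unfolding conradian_on_iff by blast
qed

end


section \<open>The sets S+ and S-\<close>

definition S_plus :: "('a::group_add \<Rightarrow> 'a \<Rightarrow> bool) \<Rightarrow> 'a set" where
  "S_plus le = {h. strict le 0 h \<and>
     (\<forall>f g u v w. crossing le f g u v w \<and> le 0 u \<longrightarrow> le h w)}"

definition S_minus :: "('a::group_add \<Rightarrow> 'a \<Rightarrow> bool) \<Rightarrow> 'a set" where
  "S_minus le = {h. strict le h 0 \<and>
     (\<forall>f g u v w. crossing le f g u v w \<and> le v 0 \<longrightarrow> le w h)}"

definition S_set :: "('a::group_add \<Rightarrow> 'a \<Rightarrow> bool) \<Rightarrow> 'a set" where
  "S_set le = {0} \<union> S_plus le \<union> S_minus le"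

lemma S_minus_conversep: "S_minus le = S_plus le\<inverse>\<inverse>"
  unfolding S_plus_def S_minus_def by (auto simp: crossing_conversep)

context left_ordered
begin

lemma S_plusI:
  "strict le 0 h \<Longrightarrow> (\<And>f g u v w. crossing le f g u v w \<Longrightarrow> le 0 u \<Longrightarrow> le h w)
    \<Longrightarrow> h \<in> S_plus le"
  unfolding S_plus_def by blast

lemma S_plusD: "h \<in> S_plus le \<Longrightarrow> crossing le f g u v w \<Longrightarrow> le 0 u \<Longrightarrow> le h w"
  unfolding S_plus_def by blast

lemma S_plus_pos: "h \<in> S_plus le \<Longrightarrow> strict le 0 h"
  unfolding S_plus_def by blast

lemma S_minusI:
  "strict le h 0 \<Longrightarrow> (\<And>f g u v w. crossing le f g u v w \<Longrightarrow> le v 0 \<Longrightarrow> le w h)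
    \<Longrightarrow> h \<in> S_minus le"
  unfolding S_minus_def by blast

lemma S_minusD: "h \<in> S_minus le \<Longrightarrow> crossing le f g u v w \<Longrightarrow> le v 0 \<Longrightarrow> le w h"
  unfolding S_minus_def by blast

lemma S_minus_neg: "h \<in> S_minus le \<Longrightarrow> strict le h 0"
  unfolding S_minus_def by blast

lemma S_plus_add:
  assumes h1: "h1 \<in> S_plus le" and h2: "h2 \<in> S_plus le"
  shows "h1 + h2 \<in> S_plus le"
proof (rule S_plusI)
  show "strict le 0 (h1 + h2)" using add_pos_pos S_plus_pos h1 h2 by blast
  fix f g u v w assume c: "crossing le f g u v w" and "le 0 u"
  show "le (h1 + h2) w"
  proof (rule ccontr)
    assume "\<not> le (h1 + h2) w"
    then have w_less: "strict le w (h1 + h2)" by (simp add: ord.not_le)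
    obtain M N where fN: "strict le (gpow_act f N v) w" using crossingE[OF c] by metis
    have h1_le: "le h1 (gpow_act f n v)" if "N \<le> n" for n
      using S_plusD[OF h1 crossing_lower_w[OF c fN that] \<open>le 0 u\<close>] .
    have down: "strict le (f + v) v" by (rule crossing_decreasing[OF c])
    have h1_less: "strict le h1 (gpow_act f n v)" for n
      using ord.le_less_trans[OF h1_le orbit_strict_antimono[OF down, of n "Suc (n + N)"]] by simp
    have "strict le h1 w" using ord.le_less_trans[OF h1_le fN] by simp
    \<comment> \<open>Raise u to h1 and translate by -h1; then h2 bounds -h1 + w.\<close>
    define x where "x = (if le u h1 then h1 else u)"
    have "crossing le f g x v w"
      using crossing_raise_u[OF c _ \<open>strict le h1 w\<close> h1_less] c by (simp add: x_def)
    then have "crossing le (- h1 + f - - h1) (- h1 + g - - h1) (- h1 + x) (- h1 + v) (- h1 + w)"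
      by (rule crossing_translate)
    moreover have "le 0 (- h1 + x)"
      using add_left_le_iff[of "- h1" h1 x] ord.linear[of u h1] by (auto simp: x_def)
    ultimately have "le h2 (- h1 + w)" by (rule S_plusD[OF h2])
    moreover have "strict le (- h1 + w) h2"
      using w_less add_left_less_iff[of "- h1" w "h1 + h2"] by (simp add: add.assoc[symmetric])
    ultimately show False by (simp add: ord.not_le[symmetric])
  qed
qed

lemma uminus_S_minus:
  assumes h: "h \<in> S_minus le"
  shows "- h \<in> S_plus le"
proof (rule S_plusI)
  show "strict le 0 (- h)" using S_minus_neg[OF h] by (simp add: neg_less_zero_iff)
  fix f g u v w assume c: "crossing le f g u v w" and "le 0 u"
  show "le (- h) w"
  proof (rule ccontr)
    assume "\<not> le (- h) w"
    then have w_less: "strict le w (- h)" by (simp add: ord.not_le)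
    obtain a b where ab: "nonconradian_pair le a b" and bw: "strict le b (- u + w)"
      using nonconradian_pair_of_crossing[OF c] by blast
    \<comment> \<open>Translating the crossing of the pair by h + u pushes its v below 0.\<close>
    let ?z = "h + u"
    have "crossing le (?z + a - ?z) (?z + (a + b - a) - ?z) (?z + a) (?z + b) (?z + (a + b))"
      using crossing_translate[OF crossing_of_nonconradian_pair[OF ab]] .
    moreover have "strict le (?z + b) 0"
    proof -
      have "strict le (?z + b) (h + w)"
        using add_left_less_iff[of ?z b "- u + w"] bw by (simp add: add.assoc)
      moreover have "strict le (h + w) 0" using add_left_less_iff[of h w "- h"] w_less by simp
      ultimately show ?thesis by (rule ord.less_trans)
    qed
    ultimately have "le (?z + (a + b)) h" using S_minusD[OF h] ord.less_imp_le by blast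
    then have "le (u + (a + b)) 0" using add_left_le_iff[of h "u + (a + b)" 0] by (simp add: add.assoc)
    moreover have "strict le 0 (u + (a + b))"
    proof -
      have "strict le 0 (a + b)" using ab add_pos_pos unfolding nonconradian_pair_def by blast
      then have "strict le u (u + (a + b))" using add_left_less_iff[of u 0] by simp
      with \<open>le 0 u\<close> show ?thesis by (rule ord.le_less_trans)
    qed
    ultimately show False by (simp add: ord.not_le[symmetric])
  qed
qed


lemma uminus_S_plus: "h \<in> S_plus le \<Longrightarrow> - h \<in> S_minus le"
proof -
  interpret rev: left_ordered "le\<inverse>\<inverse>" by (rule left_ordered_conversep)
  have "h \<in> S_minus le\<inverse>\<inverse> \<Longrightarrow> - h \<in> S_plus le\<inverse>\<inverse>" by (rule rev.uminus_S_minus)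
  then show "h \<in> S_plus le \<Longrightarrow> - h \<in> S_minus le" by (simp only: S_minus_conversep conversep_conversep)
qed

lemma S_plus_downward: "t \<in> S_plus le \<Longrightarrow> strict le 0 z \<Longrightarrow> le z t \<Longrightarrow> z \<in> S_plus le"
  by (blast intro: S_plusI dest: S_plusD ord.order_trans)

lemma S_minus_upward: "s \<in> S_minus le \<Longrightarrow> strict le z 0 \<Longrightarrow> le s z \<Longrightarrow> z \<in> S_minus le"
  by (blast intro: S_minusI dest: S_minusD ord.order_trans)

lemma S_set_pos: "t \<in> S_set le \<Longrightarrow> strict le 0 t \<Longrightarrow> t \<in> S_plus le"
  unfolding S_set_def using S_minus_neg ord.less_asym ord.less_irrefl by blast

lemma S_set_neg: "s \<in> S_set le \<Longrightarrow> strict le s 0 \<Longrightarrow> s \<in> S_minus le"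
  unfolding S_set_def using S_plus_pos ord.less_asym ord.less_irrefl by blast

lemma S_set_between:
  assumes "s \<in> S_set le" "t \<in> S_set le" "le s z" "le z t"
  shows "z \<in> S_set le"
proof -
  consider "z = 0" | "strict le 0 z" | "strict le z 0" using ord.less_linear by blast
  then show ?thesis
  proof cases
    case 2
    have "t \<in> S_plus le" using S_set_pos[OF assms(2) ord.less_le_trans[OF 2 assms(4)]] .
    then show ?thesis using S_plus_downward[OF _ 2 assms(4)] unfolding S_set_def by blast
  next
    case 3
    have "s \<in> S_minus le" using S_set_neg[OF assms(1) ord.le_less_trans[OF assms(3) 3]] .
    then show ?thesis using S_minus_upward[OF _ 3 assms(3)] unfolding S_set_def by blast
  qed (simp add: S_set_def)
qed

lemma S_set_subgroup: "subgroup_of (S_set le)"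
proof (rule subgroup_ofI_convex)
  show "0 \<in> S_set le" by (simp add: S_set_def)
  show "z \<in> S_set le" if "s \<in> S_set le" "t \<in> S_set le" "le s z" "le z t" for s t z
    using S_set_between that .
  show "- z \<in> S_set le" if "z \<in> S_set le" for z
    using that uminus_S_plus uminus_S_minus unfolding S_set_def by auto
  show "x + y \<in> S_set le"
    if "x \<in> S_set le" "y \<in> S_set le" "strict le 0 x" "strict le 0 y" for x y
    using S_plus_add[OF S_set_pos S_set_pos] that unfolding S_set_def by blast
qed

lemma S_set_convex: "convex_set le (S_set le)"
  unfolding convex_set_def using S_set_between ord.less_imp_le by blast

lemma S_set_conradian: "conradian_on le (S_set le)"
  unfolding conradian_on_iff
proof (intro ballI notI)
  fix f g assume "f \<in> S_set le" "g \<in> S_set le" and fg: "nonconradian_pair le f g"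
  then have "g \<in> S_plus le" "strict le 0 f"
    using S_set_pos unfolding nonconradian_pair_def by blast+
  then have "le g (f + g)"
    using S_plusD crossing_of_nonconradian_pair[OF fg] ord.less_imp_le by blast
  moreover have "strict le (f + g) g"
    using fg unfolding nonconradian_pair_def by (auto dest: spec[of _ 1])
  ultimately show False by (simp add: ord.not_le[symmetric])
qed

lemma convex_conradian_subgroup_subset_S_set:
  assumes D: "subgroup_of D" "convex_set le D" "conradian_on le D"
  shows "D \<subseteq> S_set le"
proof
  fix x assume "x \<in> D"
  have pos: "y \<in> S_plus le" if "y \<in> D" "strict le 0 y" for y
    using S_plusI[OF that(2) convex_conradian_subgroup_below_crossing[OF D that(1)]] .
  consider "x = 0" | "strict le 0 x" | "strict le x 0" using ord.less_linear by blast
  then show "x \<in> S_set le"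
  proof cases
    case 2
    then show ?thesis using pos \<open>x \<in> D\<close> unfolding S_set_def by blast
  next
    case 3
    then have "- x \<in> S_plus le"
      using pos D(1) \<open>x \<in> D\<close> unfolding subgroup_of_def by (simp add: neg_less_zero_iff)
    then show ?thesis using uminus_S_plus[of "- x"] unfolding S_set_def by simp
  qed (simp add: S_set_def)
qed

lemma conradian_soul_eq_S_set: "conradian_soul le = S_set le"
  unfolding conradian_soul_def
  using S_set_subgroup S_set_convex S_set_conradian convex_conradian_subgroup_subset_S_set
  by (intro the_equality) blast+

end

theorem mainTheorem7:
  fixes le :: "'a::group_add \<Rightarrow> 'a \<Rightarrow> bool"
  assumes "left_ordering le"
  defines "Splus \<equiv> {h. strict le 0 h \<and>
              (\<forall>f g u v w. crossing le f g u v w \<and> le 0 u \<longrightarrow> le h w)}"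
      and "Sminus \<equiv> {h. strict le h 0 \<and>
              (\<forall>f g u v w. crossing le f g u v w \<and> le v 0 \<longrightarrow> le w h)}"
  shows "conradian_soul le = {0} \<union> Splus \<union> Sminus"
proof -
  interpret left_ordered le by (rule left_ordered.intro) (rule assms(1))
  have "Splus = S_plus le" "Sminus = S_minus le"
    unfolding Splus_def Sminus_def S_plus_def S_minus_def by (rule refl)+
  then show ?thesis by (simp add: conradian_soul_eq_S_set S_set_def)
qed

end
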